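(* Let $\Phi=\{\varphi_i\}_{i\in\Lambda}$ be a similarity IFS in $\mathbb{R}^d$ with contraction ratios $\{r_i\}_{i\in\Lambda}$ and attractor $K$, and let $r_{\min}=\min_ir_i$. Let $T$ be a tree with alphabet $\Lambda$ which is $(K,c)$-diffuse for some $c>0$. Then $\gamma_\Phi(\partial T)$ is hyperplane $c\,\frac{r_{\min}}{\operatorname{diam}(K)}$-diffuse.
   Context: A similarity IFS is a finite family of contracting similarities $\varphi_i$ of $\mathbb{R}^d$ with ratios $r_i\in(0,1)$; its attractor $K$ satisfies $K=\bigcup_i\varphi_iK$; $\varphi_{i_1\dots i_n}=\varphi_{i_1}\circ\cdots\circ\varphi_{i_n}$; $\gamma_\Phi(j)$ is the point of $\bigcap_n\varphi_{j_1\dots j_n}(K)$ for $j\in\Lambda^{\mathbb{N}}$. A tree is a prefix-closed set $T$ of finite words over $\Lambda$ containing the empty word; $W_T(i)=\{a\in\Lambda: ia\in T\}$; $\partial T$ = infinite words whose prefixes all lie in $T$. A finite set $A$ of words is $(K,c)$-diffuse if for every affine hyperplane $\mathcal{L}$ there is $j\in A$ with $\varphi_jK\cap\mathcal{L}^{(c)}=\emptyset$ ($\mathcal{L}^{(c)}$ the open $c$-neighborhood). $T$ is $(K,c)$-diffuse if $W_T(i)$ is $(K,c)$-diffuse for every $i\in T$. A closed set $E$ is hyperplane $\beta$-diffuse if there is $\xi_0>0$ such that for all $\xi\in(0,\xi_0)$, $x\in E$, and affine hyperplanes $\mathcal{L}$, $E\cap B_\xi(x)\setminus\mathcal{L}^{(\beta\xi)}\ne\emptyset$.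 *)

theory Defs
  imports "HOL-Analysis.Analysis"
begin

definition similarity_ifs :: "'i set \<Rightarrow> ('i \<Rightarrow> 'a::euclidean_space \<Rightarrow> 'a) \<Rightarrow> ('i \<Rightarrow> real) \<Rightarrow> bool" where
  "similarity_ifs L \<phi> r \<longleftrightarrow> finite L \<and> L \<noteq> {} \<and>
     (\<forall>i\<in>L. 0 < r i \<and> r i < 1 \<and> (\<forall>x y. dist (\<phi> i x) (\<phi> i y) = r i * dist x y))"

definition is_attractor :: "'i set \<Rightarrow> ('i \<Rightarrow> 'a::euclidean_space \<Rightarrow> 'a) \<Rightarrow> 'a set \<Rightarrow> bool" where
  "is_attractor L \<phi> K \<longleftrightarrow> compact K \<and> K \<noteq> {} \<and> K = (\<Union>i\<in>L. \<phi> i ` K)"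

definition word_map :: "('i \<Rightarrow> 'a \<Rightarrow> 'a) \<Rightarrow> 'i list \<Rightarrow> 'a \<Rightarrow> 'a" where
  "word_map \<phi> w = foldr (\<lambda>i f. \<phi> i \<circ> f) w id"

definition coding_map :: "('i \<Rightarrow> 'a \<Rightarrow> 'a) \<Rightarrow> 'a set \<Rightarrow> (nat \<Rightarrow> 'i) \<Rightarrow> 'a" where
  "coding_map \<phi> K j = (THE x. x \<in> (\<Inter>n. word_map \<phi> (map j [0..<n]) ` K))"

definition is_tree :: "'i set \<Rightarrow> 'i list set \<Rightarrow> bool" where
  "is_tree L T \<longleftrightarrow> [] \<in> T \<and> T \<subseteq> lists L \<and> (\<forall>w\<in>T. \<forall>n. take n w \<in> T)"

definition children :: "'i set \<Rightarrow> 'i list set \<Rightarrow> 'i list \<Rightarrow> 'i set" where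
  "children L T w = {a\<in>L. w @ [a] \<in> T}"

definition tree_boundary :: "'i set \<Rightarrow> 'i list set \<Rightarrow> (nat \<Rightarrow> 'i) set" where
  "tree_boundary L T = {j. (\<forall>n. j n \<in> L) \<and> (\<forall>n. map j [0..<n] \<in> T)}"

definition affine_hyperplane :: "'a::euclidean_space set \<Rightarrow> bool" where
  "affine_hyperplane H \<longleftrightarrow> (\<exists>a b. a \<noteq> 0 \<and> H = {x. a \<bullet> x = b})"

definition open_nbhd :: "'a::metric_space set \<Rightarrow> real \<Rightarrow> 'a set" where
  "open_nbhd S c = {x. \<exists>y\<in>S. dist x y < c}"

definition diffuse_words :: "('i \<Rightarrow> 'a::euclidean_space \<Rightarrow> 'a) \<Rightarrow> 'a set \<Rightarrow> real \<Rightarrow> 'i list set \<Rightarrow> bool" where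
  "diffuse_words \<phi> K c A \<longleftrightarrow> finite A \<and>
     (\<forall>H. affine_hyperplane H \<longrightarrow> (\<exists>j\<in>A. word_map \<phi> j ` K \<inter> open_nbhd H c = {}))"

definition diffuse_tree :: "'i set \<Rightarrow> ('i \<Rightarrow> 'a::euclidean_space \<Rightarrow> 'a) \<Rightarrow> 'a set \<Rightarrow> real \<Rightarrow> 'i list set \<Rightarrow> bool" where
  "diffuse_tree L \<phi> K c T \<longleftrightarrow>
     (\<forall>w\<in>T. diffuse_words \<phi> K c ((\<lambda>a. [a]) ` children L T w))"

definition hyperplane_diffuse :: "'a::euclidean_space set \<Rightarrow> real \<Rightarrow> bool" where
  "hyperplane_diffuse E \<beta> \<longleftrightarrow> closed E \<and> (\<exists>\<xi>0>0. \<forall>\<xi>. 0 < \<xi> \<and> \<xi> < \<xi>0 \<longrightarrow>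
     (\<forall>x\<in>E. \<forall>H. affine_hyperplane H \<longrightarrow> E \<inter> ball x \<xi> - open_nbhd H (\<beta> * \<xi>) \<noteq> {}))"

end

theory Submission
  imports Defs
begin

text \<open>
  Let \<open>x = \<gamma>(j)\<close> with \<open>j \<in> \<partial>T\<close> and \<open>0 < \<xi> < diam K\<close>. Stop at the first level \<open>n\<close> where the
  cylinder \<open>\<phi>\<^bsub>j|n\<^esub> K\<close>, of diameter \<open>r\<^bsub>j|n\<^esub> diam K\<close>, has become smaller than \<open>\<xi>\<close>; by minimality
  \<open>r\<^bsub>j|n\<^esub> \<ge> r\<^sub>m\<^sub>i\<^sub>n \<xi> / diam K\<close>. Pulling a hyperplane \<open>\<L>\<close> back by the similarity \<open>\<phi>\<^bsub>j|n\<^esub>\<close>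
  gives a hyperplane, so diffuseness of \<open>T\<close> at the node \<open>j|n\<close> yields a child \<open>a\<close> with
  \<open>\<phi>\<^sub>a K\<close> at distance \<open>\<ge> c\<close> from it. Any boundary point through \<open>(j|n) a\<close> then lies in
  \<open>B(x, \<xi>)\<close> and at distance \<open>\<ge> c r\<^bsub>j|n\<^esub> \<ge> c r\<^sub>m\<^sub>i\<^sub>n \<xi> / diam K\<close> from \<open>\<L>\<close>.

  Closedness of \<open>\<gamma>(\<partial>T)\<close> is a Koenig-type argument: since every node has finitely many
  children, a limit point of \<open>\<gamma>(\<partial>T)\<close> adheres to the image of the cylinder of some child at
  every level, and the resulting branch \<open>j\<close> has \<open>\<gamma>(j)\<close> equal to that point.
\<close>

lemma similarity_continuous_on:
  fixes f :: "'a::metric_space \<Rightarrow> 'b::metric_space"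
  assumes "0 \<le> s" and "\<forall>x y. dist (f x) (f y) = s * dist x y"
  shows "continuous_on S f"
  by (rule lipschitz_on_continuous_on[of s], rule lipschitz_onI) (use assms in auto)

lemma similarity_diff_linear:
  fixes f :: "'a::real_inner \<Rightarrow> 'a"
  assumes "\<forall>x y. dist (f x) (f y) = s * dist x y"
  shows "linear (\<lambda>x. f x - f 0)"
  by (rule scaling_linear[where c = s]) (use assms in \<open>simp_all add: dist_norm\<close>)

lemma similarity_surj:
  fixes f :: "'a::euclidean_space \<Rightarrow> 'a"
  assumes s: "0 < s" and dist: "\<forall>x y. dist (f x) (f y) = s * dist x y"
  shows "surj f"
proof -
  let ?g = "\<lambda>x. f x - f 0"
  have lin: "linear ?g" using similarity_diff_linear[OF dist] .
  have "inj ?g"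
    by (rule injI) (use s dist in \<open>metis diff_add_cancel dist_eq_0_iff mult_eq_0_iff order_less_irrefl\<close>)
  with lin have "surj ?g" by (rule eucl.linear_inj_imp_surj)
  then show ?thesis by (metis (no_types, lifting) diff_add_cancel surj_def)
qed

lemma similarity_vimage_affine_hyperplane:
  fixes f :: "'a::euclidean_space \<Rightarrow> 'a"
  assumes s: "0 < s" and dist: "\<forall>x y. dist (f x) (f y) = s * dist x y"
    and H: "affine_hyperplane H"
  shows "affine_hyperplane (f -` H)"
proof -
  let ?g = "\<lambda>x. f x - f 0"
  have lin: "linear ?g" using similarity_diff_linear[OF dist] .
  obtain a b where "a \<noteq> 0" and H_eq: "H = {x. a \<bullet> x = b}"
    using H unfolding affine_hyperplane_def by blast
  have adj: "x \<bullet> adjoint ?g a = ?g x \<bullet> a" for x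
    using adjoint_works[OF lin] .
  have "f -` H = {x. adjoint ?g a \<bullet> x = b - a \<bullet> f 0}"
    using adj by (auto simp: H_eq inner_commute inner_diff_left algebra_simps)
  moreover have "adjoint ?g a \<noteq> 0"
  proof
    assume "adjoint ?g a = 0"
    moreover obtain x where "a = ?g x"
      using similarity_surj[OF s dist] by (metis add_diff_cancel surj_def)
    ultimately have "a \<bullet> a = 0" using adj[of x] by (simp add: inner_commute)
    with \<open>a \<noteq> 0\<close> show False by simp
  qed
  ultimately show ?thesis unfolding affine_hyperplane_def by blast
qed

lemma similarity_vimage_open_nbhd:
  fixes f :: "'a::metric_space \<Rightarrow> 'b::metric_space"
  assumes "0 < s" and "\<forall>x y. dist (f x) (f y) = s * dist x y" and "surj f"
  shows "f -` open_nbhd H (s * c) = open_nbhd (f -` H) c"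
proof -
  have "(\<exists>h\<in>H. dist (f x) h < s * c) \<longleftrightarrow> (\<exists>h. f h \<in> H \<and> dist x h < c)" for x
    using assms by (metis mult_less_cancel_left_pos surjD)
  then show ?thesis unfolding open_nbhd_def by auto
qed

lemma open_nbhd_mono: "a \<le> b \<Longrightarrow> open_nbhd S a \<subseteq> open_nbhd S b"
  unfolding open_nbhd_def by force

lemma word_map_Nil [simp]: "word_map \<phi> [] = id"
  by (simp add: word_map_def)

lemma word_map_Cons [simp]: "word_map \<phi> (a # w) = \<phi> a \<circ> word_map \<phi> w"
  by (simp add: word_map_def)

lemma word_map_append: "word_map \<phi> (u @ v) = word_map \<phi> u \<circ> word_map \<phi> v"
  by (induction u) auto

lemma word_map_dist:
  assumes "similarity_ifs L \<phi> r" and "set w \<subseteq> L"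
  shows "dist (word_map \<phi> w x) (word_map \<phi> w y) = prod_list (map r w) * dist x y"
  using assms(2) by (induction w arbitrary: x y) (use assms(1) in \<open>auto simp: similarity_ifs_def\<close>)

lemma word_ratio_pos:
  assumes "similarity_ifs L \<phi> r" and "set w \<subseteq> L"
  shows "0 < prod_list (map r w)"
  using assms(2) by (induction w) (use assms(1) in \<open>auto simp: similarity_ifs_def\<close>)

lemma word_ratio_le_Max_power:
  assumes sim: "similarity_ifs L \<phi> r" and "set w \<subseteq> L"
  shows "prod_list (map r w) \<le> Max (r ` L) ^ length w"
  using assms(2)
proof (induction w)
  case (Cons a w)
  have "finite L" and "0 < r a" using sim Cons.prems by (auto simp: similarity_ifs_def)
  then have "r a \<le> Max (r ` L)" using Cons.prems by simp
  moreover have "0 \<le> prod_list (map r w)" using word_ratio_pos[OF sim] Cons.prems by fastforce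
  ultimately show ?case using Cons \<open>0 < r a\<close> by (auto intro!: mult_mono)
qed simp

lemma similarity_ifs_Max_less_one:
  assumes "similarity_ifs L \<phi> r"
  shows "Max (r ` L) < 1"
  using assms Max_in[of "r ` L"] unfolding similarity_ifs_def by fastforce

lemma similarity_ifs_Min_pos:
  assumes "similarity_ifs L \<phi> r"
  shows "0 < Min (r ` L)"
  using assms Min_in[of "r ` L"] unfolding similarity_ifs_def by fastforce

lemma prefix_ratio_tendsto_zero:
  assumes sim: "similarity_ifs L \<phi> r" and j: "\<forall>n. j n \<in> L"
  shows "(\<lambda>n. prod_list (map r (map j [0..<n]))) \<longlonglongrightarrow> 0"
proof (rule Lim_null_comparison)
  let ?M = "Max (r ` L)"
  have "norm (prod_list (map r (map j [0..<n]))) \<le> ?M ^ n" for n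
  proof -
    have "set (map j [0..<n]) \<subseteq> L" using j by auto
    then show ?thesis
      using word_ratio_le_Max_power[OF sim] word_ratio_pos[OF sim] by fastforce
  qed
  then show "\<forall>\<^sub>F n in sequentially. norm (prod_list (map r (map j [0..<n]))) \<le> ?M ^ n"
    by simp
  have "0 < ?M"
    using sim Max_in[of "r ` L"] unfolding similarity_ifs_def by fastforce
  then show "(\<lambda>n. ?M ^ n) \<longlonglongrightarrow> 0"
    using similarity_ifs_Max_less_one[OF sim] by (intro LIMSEQ_power_zero) simp
qed

lemma is_attractorD:
  assumes "is_attractor L \<phi> K"
  shows "compact K" and "K \<noteq> {}" and "(\<Union>i\<in>L. \<phi> i ` K) = K"
  using assms unfolding is_attractor_def by (elim conjE; simp only:)+

lemma attractor_word_image_subset: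
  assumes "is_attractor L \<phi> K" and "set w \<subseteq> L"
  shows "word_map \<phi> w ` K \<subseteq> K"
  using assms(2)
proof (induction w)
  case (Cons a w)
  have "word_map \<phi> (a # w) ` K = \<phi> a ` word_map \<phi> w ` K"
    by (simp add: image_comp)
  also have "\<dots> \<subseteq> \<phi> a ` K" using Cons by (simp add: image_mono)
  also have "\<dots> \<subseteq> (\<Union>i\<in>L. \<phi> i ` K)" using Cons.prems by auto
  finally show ?case by (simp only: is_attractorD(3)[OF assms(1)])
qed simp

lemma attractor_word_image_compact:
  assumes "similarity_ifs L \<phi> r" and "is_attractor L \<phi> K" and "set w \<subseteq> L"
  shows "compact (word_map \<phi> w ` K)"
proof (rule compact_continuous_image)
  show "continuous_on K (word_map \<phi> w)"
    using word_ratio_pos[OF assms(1,3)] word_map_dist[OF assms(1,3)]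
    by (intro similarity_continuous_on[of "prod_list (map r w)"]) auto
  show "compact K" using is_attractorD(1)[OF assms(2)] .
qed

lemma word_image_dist_le:
  assumes "similarity_ifs L \<phi> r" and "set w \<subseteq> L" and "bounded K"
    and "x \<in> word_map \<phi> w ` K" and "y \<in> word_map \<phi> w ` K"
  shows "dist x y \<le> prod_list (map r w) * diameter K"
proof -
  obtain p q where "p \<in> K" "q \<in> K" and "x = word_map \<phi> w p" "y = word_map \<phi> w q"
    using assms(4,5) by blast
  moreover have "dist p q \<le> diameter K" if "p \<in> K" "q \<in> K" for p q
    using diameter_bounded_bound[OF assms(3) that] .
  ultimately show ?thesis
    using word_map_dist[OF assms(1,2)] word_ratio_pos[OF assms(1,2)] by simp
qed

lemma coding_map_eq_iff:
  assumes sim: "similarity_ifs L \<phi> r" and att: "is_attractor L \<phi> K" and j: "\<forall>n. j n \<in> L"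
  shows "y = coding_map \<phi> K j \<longleftrightarrow> (\<forall>n. y \<in> word_map \<phi> (map j [0..<n]) ` K)"
proof -
  define F where "F n = word_map \<phi> (map j [0..<n]) ` K" for n
  have prefix_in_L: "set (map j [0..<n]) \<subseteq> L" for n using j by auto
  have "F (Suc n) \<subseteq> F n" for n
  proof -
    have "F (Suc n) = word_map \<phi> (map j [0..<n]) ` word_map \<phi> [j n] ` K"
      by (simp add: F_def word_map_append image_comp)
    then show ?thesis
      using attractor_word_image_subset[OF att, of "[j n]"] j unfolding F_def by auto
  qed
  then have "F n \<subseteq> F m" if "m \<le> n" for m n
    using lift_Suc_antimono_le[of F] that by blast
  moreover have "compact (F n)" and "F n \<noteq> {}" for n
    using attractor_word_image_compact[OF sim att prefix_in_L] is_attractorD(2)[OF att]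
    unfolding F_def by auto
  ultimately have "\<Inter>(range F) \<noteq> {}"
    by (rule compact_nest[rotated 2])
  then obtain x0 where x0: "x0 \<in> \<Inter>(range F)" by blast
  have unique: "x = x'" if "x \<in> \<Inter>(range F)" and "x' \<in> \<Inter>(range F)" for x x'
  proof -
    have "bounded K" using compact_imp_bounded[OF is_attractorD(1)[OF att]] .
    have bound: "dist x x' \<le> prod_list (map r (map j [0..<n])) * diameter K" for n
    proof -
      have "x \<in> F n" and "x' \<in> F n" using that by auto
      then show ?thesis
        unfolding F_def by (rule word_image_dist_le[OF sim prefix_in_L \<open>bounded K\<close>])
    qed
    have "(\<lambda>n. prod_list (map r (map j [0..<n])) * diameter K) \<longlonglongrightarrow> 0"
      using prefix_ratio_tendsto_zero[OF sim j] by (rule tendsto_mult_left_zero)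
    then have "dist x x' \<le> 0"
      by (rule LIMSEQ_le_const) (use bound in blast)
    then show ?thesis by simp
  qed
  have coding_in: "coding_map \<phi> K j \<in> \<Inter>(range F)"
    unfolding coding_map_def F_def[symmetric]
    by (rule theI[where P = "\<lambda>x. x \<in> \<Inter>(range F)", OF x0 unique[OF _ x0]])
  then have "y = coding_map \<phi> K j \<longleftrightarrow> y \<in> \<Inter>(range F)"
    using unique[OF _ coding_in] by blast
  then show ?thesis by (simp add: F_def)
qed

lemma coding_map_in_word_image:
  assumes "similarity_ifs L \<phi> r" and "is_attractor L \<phi> K" and "\<forall>n. j n \<in> L"
  shows "coding_map \<phi> K j \<in> word_map \<phi> (map j [0..<n]) ` K"
  using coding_map_eq_iff[OF assms, of "coding_map \<phi> K j"] by simp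

lemma tree_boundary_iff:
  assumes "is_tree L T"
  shows "j \<in> tree_boundary L T \<longleftrightarrow> (\<forall>n. map j [0..<n] \<in> T)"
proof -
  have "j n \<in> L" if "map j [0..<Suc n] \<in> T" for n
    using that assms by (auto simp: is_tree_def in_lists_conv_set)
  then show ?thesis unfolding tree_boundary_def by blast
qed

lemma path_through_extendable_set:
  assumes "w \<in> S" and extend: "\<forall>v\<in>S. \<exists>a. v @ [a] \<in> S"
  obtains j where "map j [0..<length w] = w" and "\<And>n. map j [0..<length w + n] \<in> S"
proof -
  obtain step where step: "\<forall>v\<in>S. v @ [step v] \<in> S" using extend by metis
  define u where "u = rec_nat w (\<lambda>_ v. v @ [step v])"
  have u_0: "u 0 = w" and u_Suc: "u (Suc n) = u n @ [step (u n)]" for n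
    unfolding u_def by auto
  have u_in_S: "u n \<in> S" for n
    by (induction n) (use \<open>w \<in> S\<close> step u_0 u_Suc in auto)
  define j where "j k = (if k < length w then w ! k else step (u (k - length w)))" for k
  have j_prefix: "map j [0..<length w] = w"
    by (intro nth_equalityI) (simp_all add: j_def)
  have "map j [0..<length w + n] = u n" for n
  proof (induction n)
    case (Suc n)
    then show ?case by (simp add: u_Suc j_def)
  qed (simp add: j_prefix u_0)
  with j_prefix u_in_S show ?thesis using that by auto
qed

lemma diffuse_tree_has_child:
  fixes \<phi> :: "'i \<Rightarrow> 'a::euclidean_space \<Rightarrow> 'a"
  assumes "diffuse_tree L \<phi> K c T" and "w \<in> T"
  shows "\<exists>a. w @ [a] \<in> T"
proof -
  obtain e :: 'a where "e \<in> Basis" using nonempty_Basis by blast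
  then have "affine_hyperplane {x. e \<bullet> x = 0}"
    unfolding affine_hyperplane_def using nonzero_Basis by blast
  moreover have "diffuse_words \<phi> K c ((\<lambda>a. [a]) ` children L T w)"
    using assms unfolding diffuse_tree_def by blast
  ultimately have "children L T w \<noteq> {}" unfolding diffuse_words_def by blast
  then show ?thesis unfolding children_def by blast
qed

lemma diffuse_tree_boundary_extends:
  fixes \<phi> :: "'i \<Rightarrow> 'a::euclidean_space \<Rightarrow> 'a"
  assumes tree: "is_tree L T" and "diffuse_tree L \<phi> K c T" and w: "w \<in> T"
  obtains j where "j \<in> tree_boundary L T" and "map j [0..<length w] = w"
proof -
  obtain j where j_prefix: "map j [0..<length w] = w"
    and beyond: "\<And>n. map j [0..<length w + n] \<in> T"
    using path_through_extendable_set[OF w] diffuse_tree_has_child[OF assms(2)] by blast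
  have "map j [0..<n] \<in> T" for n
  proof (cases "n \<le> length w")
    case True
    then have "map j [0..<n] = take n w" by (metis j_prefix take_map take_upt add_0)
    then show ?thesis using tree w unfolding is_tree_def by simp
  next
    case False
    then show ?thesis using beyond[of "n - length w"] by simp
  qed
  then show ?thesis using that j_prefix tree_boundary_iff[OF tree] by blast
qed

definition cylinder :: "'i set \<Rightarrow> 'i list set \<Rightarrow> 'i list \<Rightarrow> (nat \<Rightarrow> 'i) set" where
  "cylinder L T w = {j \<in> tree_boundary L T. map j [0..<length w] = w}"

lemma cylinder_eq_UN_children:
  "cylinder L T w = (\<Union>a\<in>children L T w. cylinder L T (w @ [a]))"
proof (intro equalityI subsetI)
  fix j assume "j \<in> cylinder L T w"
  then have j: "j \<in> tree_boundary L T" and j_prefix: "map j [0..<length w] = w"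
    by (simp_all add: cylinder_def)
  let ?a = "j (length w)"
  have "map j [0..<Suc (length w)] = w @ [?a]" using j_prefix by simp
  moreover have "map j [0..<Suc (length w)] \<in> T" and "?a \<in> L"
    using j unfolding tree_boundary_def by blast+
  ultimately have "?a \<in> children L T w" and "j \<in> cylinder L T (w @ [?a])"
    using j by (simp_all add: children_def cylinder_def)
  then show "j \<in> (\<Union>a\<in>children L T w. cylinder L T (w @ [a]))" by blast
next
  fix j assume "j \<in> (\<Union>a\<in>children L T w. cylinder L T (w @ [a]))"
  then show "j \<in> cylinder L T w" by (auto simp: cylinder_def)
qed

lemma coding_image_cylinder_subset:
  assumes "similarity_ifs L \<phi> r" and "is_attractor L \<phi> K"
  shows "coding_map \<phi> K ` cylinder L T w \<subseteq> word_map \<phi> w ` K"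
proof
  fix y assume "y \<in> coding_map \<phi> K ` cylinder L T w"
  then obtain j where "j \<in> tree_boundary L T" "map j [0..<length w] = w" "y = coding_map \<phi> K j"
    unfolding cylinder_def by blast
  then show "y \<in> word_map \<phi> w ` K"
    using coding_map_in_word_image[OF assms, of j "length w"] by (auto simp: tree_boundary_def)
qed

lemma closed_coding_image_tree_boundary:
  assumes sim: "similarity_ifs L \<phi> r" and att: "is_attractor L \<phi> K" and tree: "is_tree L T"
  shows "closed (coding_map \<phi> K ` tree_boundary L T)"
proof -
  let ?\<gamma> = "coding_map \<phi> K"
  have "y \<in> ?\<gamma> ` tree_boundary L T" if y: "y \<in> closure (?\<gamma> ` tree_boundary L T)" for y
  proof -
    define S where "S = {w \<in> T. y \<in> closure (?\<gamma> ` cylinder L T w)}"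
    have "[] \<in> S" using y tree by (simp add: S_def cylinder_def is_tree_def)
    moreover have "\<exists>a. w @ [a] \<in> S" if w_S: "w \<in> S" for w
    proof -
      have "finite (children L T w)" using sim by (simp add: similarity_ifs_def children_def)
      then have "closure (?\<gamma> ` cylinder L T w)
          \<subseteq> (\<Union>a\<in>children L T w. closure (?\<gamma> ` cylinder L T (w @ [a])))"
        by (subst cylinder_eq_UN_children, intro closure_minimal closed_UN)
          (auto intro: closure_subset[THEN subsetD])
      then obtain a where "a \<in> children L T w" and "y \<in> closure (?\<gamma> ` cylinder L T (w @ [a]))"
        using w_S unfolding S_def by blast
      then show ?thesis unfolding S_def children_def by blast
    qed
    ultimately obtain j where j_S: "\<And>n. map j [0..<n] \<in> S"
      using path_through_extendable_set[of "[]" S] by (metis list.size(3) plus_nat.add_0)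
    then have j: "j \<in> tree_boundary L T"
      using tree_boundary_iff[OF tree] unfolding S_def by blast
    then have j_L: "\<forall>n. j n \<in> L" unfolding tree_boundary_def by blast
    have "y \<in> word_map \<phi> (map j [0..<n]) ` K" for n
    proof -
      have "closed (word_map \<phi> (map j [0..<n]) ` K)"
        using j_L by (intro compact_imp_closed attractor_word_image_compact[OF sim att]) auto
      then have "closure (?\<gamma> ` cylinder L T (map j [0..<n])) \<subseteq> word_map \<phi> (map j [0..<n]) ` K"
        by (rule closure_minimal[OF coding_image_cylinder_subset[OF sim att]])
      then show ?thesis using j_S[of n] unfolding S_def by blast
    qed
    then have "y = ?\<gamma> j" using coding_map_eq_iff[OF sim att j_L] by blast
    with j show ?thesis by blast
  qed
  then show ?thesis using closure_subset_eq by blast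
qed

lemma exists_scale_between:
  fixes q :: "nat \<Rightarrow> real"
  assumes "q \<longlonglongrightarrow> 0" and "0 < t" and "t \<le> q 0"
    and "0 \<le> \<rho>" and step: "\<And>n. \<rho> * q n \<le> q (Suc n)"
  shows "\<exists>n. \<rho> * t \<le> q n \<and> q n < t"
proof -
  have "\<exists>n. q n < t"
    using order_tendstoD(2)[OF assms(1,2)] by (metis eventually_sequentially order.refl)
  then have small: "q (LEAST n. q n < t) < t" by (rule LeastI_ex)
  then obtain m where m: "(LEAST n. q n < t) = Suc m"
    using \<open>t \<le> q 0\<close> by (metis not0_implies_Suc not_le)
  then have "t \<le> q m" using not_less_Least[of m "\<lambda>n. q n < t"] by simp
  then have "\<rho> * t \<le> q (Suc m)"
    using step[of m] \<open>0 \<le> \<rho>\<close> by (meson mult_left_mono order_trans)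
  with small m show ?thesis by auto
qed

lemma diffuse_tree_point_off_hyperplane:
  fixes \<phi> :: "'i \<Rightarrow> 'a::euclidean_space \<Rightarrow> 'a"
  assumes sim: "similarity_ifs L \<phi> r" and att: "is_attractor L \<phi> K" and tree: "is_tree L T"
    and dif: "diffuse_tree L \<phi> K c T" and w: "w \<in> T" and H: "affine_hyperplane H"
  shows "\<exists>y\<in>coding_map \<phi> K ` tree_boundary L T.
           y \<in> word_map \<phi> w ` K \<and> y \<notin> open_nbhd H (prod_list (map r w) * c)"
proof -
  let ?f = "word_map \<phi> w" and ?s = "prod_list (map r w)"
  have w_L: "set w \<subseteq> L" using tree w by (auto simp: is_tree_def in_lists_conv_set)
  have s_pos: "0 < ?s" by (rule word_ratio_pos[OF sim w_L])
  have f_dist: "\<forall>x y. dist (?f x) (?f y) = ?s * dist x y" using word_map_dist[OF sim w_L] by blast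
  have "affine_hyperplane (?f -` H)"
    by (rule similarity_vimage_affine_hyperplane[OF s_pos f_dist H])
  moreover have "diffuse_words \<phi> K c ((\<lambda>a. [a]) ` children L T w)"
    using dif w unfolding diffuse_tree_def by blast
  ultimately obtain a where a: "a \<in> children L T w"
    and far: "\<phi> a ` K \<inter> open_nbhd (?f -` H) c = {}"
    unfolding diffuse_words_def by auto
  then have a_L: "a \<in> L" and "w @ [a] \<in> T" unfolding children_def by auto
  then obtain j where j: "j \<in> tree_boundary L T"
    and j_prefix: "map j [0..<length (w @ [a])] = w @ [a]"
    using diffuse_tree_boundary_extends[OF tree dif] by blast
  have "coding_map \<phi> K j \<in> word_map \<phi> (w @ [a]) ` K"
    using coding_map_in_word_image[OF sim att, of j "length (w @ [a])"] j j_prefix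
    unfolding tree_boundary_def by simp
  then obtain z where z: "z \<in> \<phi> a ` K" and y_eq: "coding_map \<phi> K j = ?f z"
    by (auto simp: word_map_append)
  have "z \<in> K" using z attractor_word_image_subset[OF att, of "[a]"] a_L by auto
  moreover have "?f z \<notin> open_nbhd H (?s * c)"
    using far z similarity_vimage_open_nbhd[OF s_pos f_dist similarity_surj[OF s_pos f_dist]] by blast
  ultimately show ?thesis using j y_eq by (metis image_eqI)
qed

lemma coding_image_ball_off_hyperplane:
  fixes \<phi> :: "'i \<Rightarrow> 'a::euclidean_space \<Rightarrow> 'a"
  assumes sim: "similarity_ifs L \<phi> r" and att: "is_attractor L \<phi> K" and tree: "is_tree L T"
    and dif: "diffuse_tree L \<phi> K c T" and "0 \<le> c"
    and \<xi>: "0 < \<xi>" "\<xi> \<le> diameter K"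
    and x: "x \<in> coding_map \<phi> K ` tree_boundary L T" and H: "affine_hyperplane H"
  shows "\<exists>y\<in>coding_map \<phi> K ` tree_boundary L T.
           dist x y < \<xi> \<and> y \<notin> open_nbhd H (c * Min (r ` L) / diameter K * \<xi>)"
proof -
  let ?\<rho> = "Min (r ` L)" and ?D = "diameter K"
  obtain j where j: "j \<in> tree_boundary L T" and x_eq: "x = coding_map \<phi> K j" using x by blast
  then have j_L: "\<forall>n. j n \<in> L" unfolding tree_boundary_def by blast
  define p where "p n = prod_list (map r (map j [0..<n]))" for n
  have "bounded K" using compact_imp_bounded[OF is_attractorD(1)[OF att]] .
  have D_pos: "0 < ?D" using \<xi> by linarith
  have "?\<rho> * (p n * ?D) \<le> p (Suc n) * ?D" for n
  proof -
    have "?\<rho> \<le> r (j n)" using j_L sim by (simp add: similarity_ifs_def)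
    moreover have "0 < p n"
      unfolding p_def using word_ratio_pos[OF sim, of "map j [0..<n]"] j_L by auto
    ultimately have "?\<rho> * p n \<le> p n * r (j n)" by (simp add: mult.commute)
    then have "?\<rho> * p n * ?D \<le> p n * r (j n) * ?D"
      using D_pos by (intro mult_right_mono) simp_all
    then show ?thesis by (simp add: p_def mult.assoc)
  qed
  moreover have "(\<lambda>n. p n * ?D) \<longlonglongrightarrow> 0"
    unfolding p_def using prefix_ratio_tendsto_zero[OF sim j_L] by (rule tendsto_mult_left_zero)
  ultimately obtain n where lower: "?\<rho> * \<xi> \<le> p n * ?D" and upper: "p n * ?D < \<xi>"
    using exists_scale_between[of "\<lambda>n. p n * ?D" \<xi> ?\<rho>] \<xi> similarity_ifs_Min_pos[OF sim]
    by (auto simp: p_def)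
  let ?w = "map j [0..<n]"
  have "?w \<in> T" using j unfolding tree_boundary_def by blast
  then obtain y where y: "y \<in> coding_map \<phi> K ` tree_boundary L T"
    and y_in: "y \<in> word_map \<phi> ?w ` K" and y_off: "y \<notin> open_nbhd H (p n * c)"
    using diffuse_tree_point_off_hyperplane[OF sim att tree dif _ H] unfolding p_def by blast
  have "set ?w \<subseteq> L" using j_L by auto
  moreover have "x \<in> word_map \<phi> ?w ` K" using coding_map_in_word_image[OF sim att j_L] x_eq by simp
  ultimately have "dist x y \<le> p n * ?D"
    unfolding p_def using word_image_dist_le[OF sim _ \<open>bounded K\<close> _ y_in] by blast
  with upper have "dist x y < \<xi>" by linarith
  moreover have "c * ?\<rho> / ?D * \<xi> \<le> p n * c"
    using mult_left_mono[OF lower \<open>0 \<le> c\<close>] D_pos by (simp add: field_simps)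
  then have "y \<notin> open_nbhd H (c * ?\<rho> / ?D * \<xi>)"
    using y_off open_nbhd_mono by blast
  ultimately show ?thesis using y by blast
qed

theorem proposition3p11:
  fixes L :: "'i set" and \<phi> :: "'i \<Rightarrow> 'a::euclidean_space \<Rightarrow> 'a" and r :: "'i \<Rightarrow> real"
    and K :: "'a set" and T :: "'i list set" and c :: real
  assumes "similarity_ifs L \<phi> r"
    and "is_attractor L \<phi> K"
    and "is_tree L T"
    and "c > 0"
    and "diffuse_tree L \<phi> K c T"
  shows "hyperplane_diffuse (coding_map \<phi> K ` tree_boundary L T) (c * Min (r ` L) / diameter K)"
proof -
  let ?E = "coding_map \<phi> K ` tree_boundary L T"
  have closed: "closed ?E" by (rule closed_coding_image_tree_boundary[OF assms(1-3)])
  show ?thesis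
  proof (cases "diameter K = 0")
    case True
    \<comment> \<open>then the radius \<open>c r\<^sub>m\<^sub>i\<^sub>n / 0 * \<xi>\<close> is \<open>0\<close> and every neighbourhood is empty\<close>
    then have "x \<in> ?E \<inter> ball x \<xi> - open_nbhd H (c * Min (r ` L) / diameter K * \<xi>)"
      if "x \<in> ?E" and "0 < \<xi>" for x \<xi> H
      using that by (simp add: open_nbhd_def)
    then show ?thesis
      using closed unfolding hyperplane_diffuse_def by (intro conjI exI[of _ 1]) fastforce+
  next
    case False
    then have "0 < diameter K"
      using diameter_ge_0[OF compact_imp_bounded[OF is_attractorD(1)[OF assms(2)]]] by linarith
    then show ?thesis
      using closed coding_image_ball_off_hyperplane[OF assms(1-3,5)] \<open>c > 0\<close>
      unfolding hyperplane_diffuse_def by (intro conjI exI[of _ "diameter K"]) fastforce+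
  qed
qed

end
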